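(* Let $X$ be a Banach lattice and let $S$ be a singular functional on $X$. Then $$\|S\|_{X^*}=\sup\left\{\frac{S(f)}{\operatorname{dist}_X(f,X_a)}: f\in X\setminus X_a,\ \|f\|_X=1\right\}.$$
   Context: $X^*$ is the topological dual of $X$. For a Banach lattice $X$, an element $x$ is order continuous if for every sequence $0\le x_n\le|x|$ with $x_n\downarrow0$ one has $\|x_n\|\to0$; $X_a$ is the closed ideal of order continuous elements. A singular functional is an $S\in X^*$ with $S(x)=0$ for all $x\in X_a$. $\operatorname{dist}_X(f,X_a)=\inf\{\|f-g\|_X:g\in X_a\}$. *)

theory Defs
  imports "HOL-Analysis.Analysis"
begin

class banach_lattice = banach + ordered_real_vector + lattice +
  assumes lattice_norm: "sup x (- x) \<le> sup y (- y) \<Longrightarrow> norm x \<le> norm y"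

definition lat_abs :: "'a::banach_lattice \<Rightarrow> 'a" where
  "lat_abs x = sup x (- x)"

definition order_decr_to_zero :: "(nat \<Rightarrow> 'a::banach_lattice) \<Rightarrow> bool" where
  "order_decr_to_zero xs \<longleftrightarrow> decseq xs \<and>
     (\<forall>n. 0 \<le> xs n) \<and> (\<forall>y. (\<forall>n. y \<le> xs n) \<longrightarrow> y \<le> 0)"

definition order_continuous :: "'a::banach_lattice \<Rightarrow> bool" where
  "order_continuous x \<longleftrightarrow>
     (\<forall>xs. (\<forall>n. 0 \<le> xs n \<and> xs n \<le> lat_abs x) \<and> order_decr_to_zero xs
        \<longrightarrow> (\<lambda>n. norm (xs n)) \<longlonglongrightarrow> 0)"

definition oc_part :: "'a::banach_lattice set" where
  "oc_part = {x. order_continuous x}"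

definition singular_functional :: "('a::banach_lattice \<Rightarrow>\<^sub>L real) \<Rightarrow> bool" where
  "singular_functional S \<longleftrightarrow> (\<forall>x\<in>oc_part. blinfun_apply S x = 0)"

end

theory Submission
  imports Defs
begin

text \<open>Since \<open>S\<close> vanishes on \<open>X\<^sub>a\<close>, \<open>S f = S (f - g) \<le> \<parallel>S\<parallel> \<parallel>f - g\<parallel>\<close> for every
\<open>g \<in> X\<^sub>a\<close>, so no quotient exceeds \<open>\<parallel>S\<parallel>\<close>. Conversely, a unit vector \<open>f\<close> with \<open>S f > 0\<close>
lies outside \<open>X\<^sub>a\<close> and, as \<open>0 \<in> X\<^sub>a\<close>, satisfies \<open>dist(f, X\<^sub>a) \<le> 1\<close>; hence its
quotient is at least \<open>S f\<close>, and these values approach \<open>\<parallel>S\<parallel>\<close>. Nothing about Banach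
lattices is needed beyond \<open>0 \<in> X\<^sub>a\<close>.\<close>

lemma zero_in_oc_part: "(0::'a::banach_lattice) \<in> oc_part"
proof -
  have "(\<lambda>n. norm (xs n)) \<longlonglongrightarrow> 0"
    if "\<forall>n. 0 \<le> xs n \<and> xs n \<le> lat_abs (0::'a)" for xs :: "nat \<Rightarrow> 'a"
  proof -
    have "\<forall>n. xs n = 0" using that by (auto simp: lat_abs_def intro: order.antisym)
    then show ?thesis by simp
  qed
  then show ?thesis unfolding oc_part_def order_continuous_def by auto
qed

lemma norm_blinfun_le_unit_bound:
  fixes S :: "'a::real_normed_vector \<Rightarrow>\<^sub>L real"
  assumes "0 \<le> c" and unit_bound: "\<And>v. norm v = 1 \<Longrightarrow> S v \<le> c"
  shows "norm S \<le> c"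
proof (rule norm_blinfun_bound[OF \<open>0 \<le> c\<close>])
  fix x :: 'a
  show "norm (S x) \<le> c * norm x"
  proof (cases "x = 0")
    case False
    define u where "u = x /\<^sub>R norm x"
    have "norm u = 1" "norm (- u) = 1" using False by (auto simp: u_def)
    then have "\<bar>S u\<bar> * norm x \<le> c * norm x" using unit_bound[of u] unit_bound[of "- u"]
      by (auto simp: blinfun.minus_right intro: mult_right_mono)
    moreover have "S x = norm x * S u" using False by (simp add: u_def blinfun.scaleR_right)
    ultimately show ?thesis by (simp add: abs_mult mult.commute)
  qed simp
qed

lemma blinfun_le_norm_mult_infdist:
  fixes S :: "'a::real_normed_vector \<Rightarrow>\<^sub>L real"
  assumes "Z \<noteq> {}" and vanish: "\<forall>z\<in>Z. S z = 0"
  shows "S f \<le> norm S * infdist f Z"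
proof (cases "norm S = 0")
  case True
  then show ?thesis using norm_blinfun[of S f] by simp
next
  case False
  then have pos: "norm S > 0" by simp
  have "S f / norm S \<le> dist f z" if "z \<in> Z" for z
  proof -
    have "S f = S (f - z)" using vanish that by (simp add: blinfun.diff_right)
    also have "\<dots> \<le> norm S * norm (f - z)" using norm_blinfun[of S "f - z"] by simp
    finally show ?thesis using pos by (simp add: divide_le_eq dist_norm mult.commute)
  qed
  then have "S f / norm S \<le> infdist f Z"
    unfolding infdist_notempty[OF \<open>Z \<noteq> {}\<close>] by (intro cINF_greatest \<open>Z \<noteq> {}\<close>)
  then show ?thesis using pos by (simp add: divide_le_eq mult.commute)
qed

text \<open>\<open>Z\<close> need not be closed; on its closure the quotient is the junk value \<open>S f / 0 = 0\<close>.\<close>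

lemma blinfun_div_infdist_le_norm:
  fixes S :: "'a::real_normed_vector \<Rightarrow>\<^sub>L real"
  assumes "Z \<noteq> {}" and "\<forall>z\<in>Z. S z = 0"
  shows "S f / infdist f Z \<le> norm S"
  using blinfun_le_norm_mult_infdist[OF assms, of f] infdist_nonneg[of f Z]
  by (cases "infdist f Z = 0") (simp_all add: divide_le_eq)

lemma blinfun_le_div_infdist:
  fixes S :: "'a::real_normed_vector \<Rightarrow>\<^sub>L real"
  assumes "0 \<in> Z" and "\<forall>z\<in>Z. S z = 0" and "norm f = 1" and "0 < S f"
  shows "S f \<le> S f / infdist f Z"
proof -
  have "infdist f Z \<noteq> 0"
    using blinfun_le_norm_mult_infdist[of Z S f] assms by fastforce
  then have "0 < infdist f Z" using infdist_nonneg[of f Z] by simp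
  moreover have "infdist f Z \<le> 1"
    using infdist_le[OF \<open>0 \<in> Z\<close>, of f] \<open>norm f = 1\<close> by simp
  ultimately show ?thesis using \<open>0 < S f\<close> by (simp add: le_divide_eq mult_left_le)
qed

lemma norm_blinfun_le_div_infdist_bound:
  fixes S :: "'a::real_normed_vector \<Rightarrow>\<^sub>L real"
  assumes "0 \<in> Z" and vanish: "\<forall>z\<in>Z. S z = 0" and "0 \<le> c"
    and bound: "\<And>f. f \<notin> Z \<Longrightarrow> norm f = 1 \<Longrightarrow> S f / infdist f Z \<le> c"
  shows "norm S \<le> c"
proof (rule norm_blinfun_le_unit_bound[OF \<open>0 \<le> c\<close>])
  fix v :: 'a
  assume "norm v = 1"
  show "S v \<le> c"
  proof (cases "0 < S v")
    case True
    then have "v \<notin> Z" using vanish by auto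
    then show ?thesis
      using blinfun_le_div_infdist[OF \<open>0 \<in> Z\<close> vanish \<open>norm v = 1\<close> True]
        bound[of v] \<open>norm v = 1\<close> by simp
  qed (use \<open>0 \<le> c\<close> in simp)
qed

lemma norm_blinfun_eq_Sup_div_infdist:
  fixes S :: "'a::real_normed_vector \<Rightarrow>\<^sub>L real"
  assumes "0 \<in> Z" and vanish: "\<forall>z\<in>Z. S z = 0"
  defines "A \<equiv> {f. f \<notin> Z \<and> norm f = 1}"
  shows "norm S = (if A = {} then 0 else Sup ((\<lambda>f. S f / infdist f Z) ` A))"
proof -
  let ?q = "\<lambda>f. S f / infdist f Z"
  have le_norm: "?q f \<le> norm S" for f
    using blinfun_div_infdist_le_norm[of Z S f] assms by auto
  have norm_le: "norm S \<le> c" if "0 \<le> c" "\<forall>f\<in>A. ?q f \<le> c" for c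
    using norm_blinfun_le_div_infdist_bound[OF \<open>0 \<in> Z\<close> vanish] that by (auto simp: A_def)
  show ?thesis
  proof (cases "A = {}")
    case True
    then show ?thesis using norm_le[of 0] by simp
  next
    case False
    then obtain f0 where "f0 \<in> A" by auto
    have nonneg_bound: "0 \<le> c" if "\<forall>f\<in>A. ?q f \<le> c" for c
    proof (rule ccontr)
      assume "\<not> 0 \<le> c"
      with that have "S = 0" using norm_le[of 0] by fastforce
      then show False using that \<open>f0 \<in> A\<close> \<open>\<not> 0 \<le> c\<close> by auto
    qed
    have "Sup (?q ` A) = norm S"
      using False le_norm norm_le nonneg_bound by (intro cSup_eq_non_empty) auto
    with False show ?thesis by simp
  qed
qed

theorem lemma2p2:
  fixes S :: "'a::banach_lattice \<Rightarrow>\<^sub>L real"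
  assumes "singular_functional S"
  shows "norm S =
    (let A = {f. f \<notin> oc_part \<and> norm f = 1} in
     if A = {} then 0
     else Sup ((\<lambda>f. blinfun_apply S f / infdist f oc_part) ` A))"
  using norm_blinfun_eq_Sup_div_infdist[OF zero_in_oc_part, of S] assms
  by (simp add: singular_functional_def Let_def)

end
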